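(* Let $m,b\ge1$, let $\mathbf M$ be an invertible $\mathbb{F}_{2^m}$-linear map of $(\mathbb{F}_{2^m})^b$ (i.e. $\mathbf M\in\mathrm{GL}((\mathbb{F}_{2^m})^b)$) of order $t$, regard $V=(\mathbb{F}_{2^m})^b$ as $(\mathbb{F}_2)^{mb}$, and define $\alpha:V\to(\mathbb{F}_2)^{2^m bt}$ by $\alpha(v)=(\varepsilon(v),\varepsilon(\mathbf Mv),\dots,\varepsilon(\mathbf M^{t-1}v))$. Then $\dim_{\mathbb{F}_2}\langle\alpha(V)\rangle\le 2^m bt-(bt-1)-mb(t-1)$.
   Context: Identify $(\mathbb{F}_2)^m$ with $\mathbb{F}_{2^m}=\mathbb{F}_2[x]/(p)$ for a primitive polynomial $p$ of degree $m$, with primitive element $\gamma$ (a root of $p$). Let $e_1,\dots,e_{2^m}$ be the standard basis of $(\mathbb{F}_2)^{2^m}$ and define $\varepsilon':\mathbb{F}_{2^m}\to(\mathbb{F}_2)^{2^m}$ by $\varepsilon'(0)=e_1$, $\varepsilon'(\gamma^i)=e_{i+1}$ for $1\le i\le2^m-1$. For $v=(v_1,\dots,v_b)\in(\mathbb{F}_{2^m})^b$ set $\varepsilon(v)=(\varepsilon'(v_1),\dots,\varepsilon'(v_b))\in(\mathbb{F}_2)^{2^m b}$. $\langle S\rangle$ denotes the $\mathbb{F}_2$-linear span. *)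

theory Defs
  imports "HOL-Library.Z2" "HOL-Computational_Algebra.Polynomial_Factorial" "HOL-Library.Function_Algebras"
begin

text \<open>GF(2) is the type bit. GF(2^m) is modelled as F_2[x]/(p): polynomials over bit of
  degree < deg p, with multiplication modulo p. The primitive element gamma is the class of x.\<close>

definition primitive_poly :: "nat \<Rightarrow> bit poly \<Rightarrow> bool" where
  "primitive_poly m p \<longleftrightarrow> degree p = m \<and> irreducible p \<and>
     [:0, 1:] ^ (2 ^ m - 1) mod p = 1 \<and>
     (\<forall>i. 1 \<le> i \<and> i < 2 ^ m - 1 \<longrightarrow> [:0, 1:] ^ i mod p \<noteq> 1)"

definition gf_elems :: "bit poly \<Rightarrow> bit poly set" where
  "gf_elems p = {q. q mod p = q}"

definition gf_vecs :: "bit poly \<Rightarrow> nat \<Rightarrow> (nat \<Rightarrow> bit poly) set" where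
  "gf_vecs p b = {v. (\<forall>i<b. v i \<in> gf_elems p) \<and> (\<forall>i\<ge>b. v i = 0)}"

definition gf_smult :: "bit poly \<Rightarrow> bit poly \<Rightarrow> (nat \<Rightarrow> bit poly) \<Rightarrow> (nat \<Rightarrow> bit poly)" where
  "gf_smult p c v = (\<lambda>i. (c * v i) mod p)"

text \<open>0-based position of the 1 in eps'(x): 0 for x = 0, and i for x = gamma^i, 1 <= i <= 2^m-1.\<close>
definition eps_idx :: "bit poly \<Rightarrow> bit poly \<Rightarrow> nat" where
  "eps_idx p x = (if x = 0 then 0 else (LEAST i. 1 \<le> i \<and> [:0, 1:] ^ i mod p = x))"

definition eps_vec :: "bit poly \<Rightarrow> nat \<Rightarrow> nat \<Rightarrow> (nat \<Rightarrow> bit poly) \<Rightarrow> (nat \<Rightarrow> bit)" where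
  "eps_vec p m b v = (\<lambda>n. if \<exists>j<b. n = j * 2 ^ m + eps_idx p (v j) then 1 else 0)"

definition alpha_map :: "bit poly \<Rightarrow> nat \<Rightarrow> nat \<Rightarrow> nat \<Rightarrow> ((nat \<Rightarrow> bit poly) \<Rightarrow> (nat \<Rightarrow> bit poly))
    \<Rightarrow> (nat \<Rightarrow> bit poly) \<Rightarrow> (nat \<Rightarrow> bit)" where
  "alpha_map p m b t M v = (\<lambda>n. if n < 2 ^ m * b * t
      then eps_vec p m b ((M ^^ (n div (2 ^ m * b))) v) (n mod (2 ^ m * b)) else 0)"

definition bscale :: "bit \<Rightarrow> (nat \<Rightarrow> bit) \<Rightarrow> (nat \<Rightarrow> bit)" where
  "bscale c f = (\<lambda>i. c * f i)"

end

theory Submission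
  imports Defs
begin

text \<open>Decode the \<open>k\<close>-th chunk of a word \<open>y\<close> into \<open>D\<^sub>k y \<in> V\<close> by summing \<open>y\<^sub>s \<gamma>^s\<close> over each
  block of \<open>2^m\<close> bits, slot 0 standing for the field element 0. This is \<open>\<bbbF>\<^sub>2\<close>-linear in \<open>y\<close> and
  \<open>D\<^sub>k \<alpha>(v) = M^k v\<close>, so \<open>\<alpha>(V)\<close> lies in the subspace of words with \<open>D\<^sub>k y = M^k (D\<^sub>0 y)\<close> whose
  \<open>bt\<close> blocks all have the same parity. Such a word is determined by its bits at: all slots of
  all blocks except slot 0 and the \<open>m\<close> slots with \<open>\<gamma>^s = x^i\<close>; the \<open>x^i\<close>-slots of chunk 0; and
  the very first bit. Indeed, if these vanish then \<open>D\<^sub>0 y = 0\<close>, so \<open>D\<^sub>k y = 0\<close>, whose coefficients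
  are the \<open>x^i\<close>-slots of chunk \<open>k\<close>; finally each slot 0 equals the common parity, which is the
  first bit. Counting these \<open>bt(2^m - 1 - m) + bm + 1\<close> positions gives the bound.\<close>

lemma bit_UNIV: "(UNIV :: bit set) = {0, 1}"
  by (auto intro: bit.exhaust)

lemma mem_gf_elems_iff:
  assumes "p \<noteq> 0"
  shows "x \<in> gf_elems p \<longleftrightarrow> x = 0 \<or> degree x < degree p"
proof
  assume "x \<in> gf_elems p"
  then have "x mod p = x" by (simp add: gf_elems_def)
  then show "x = 0 \<or> degree x < degree p"
    using assms by (metis degree_mod_less)
qed (auto simp: gf_elems_def mod_poly_less)

lemma gf_elems_mod: "x mod p \<in> gf_elems p"
  by (simp add: gf_elems_def)

lemma gf_elems_add: "x \<in> gf_elems p \<Longrightarrow> y \<in> gf_elems p \<Longrightarrow> x + y \<in> gf_elems p"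
  by (simp add: gf_elems_def poly_mod_add_left)

lemma gf_elems_smult: "x \<in> gf_elems p \<Longrightarrow> smult c x \<in> gf_elems p"
  by (simp add: gf_elems_def mod_smult_left)

lemma gf_elems_sum: "(\<And>s. s \<in> A \<Longrightarrow> f s \<in> gf_elems p) \<Longrightarrow> sum f A \<in> gf_elems p"
  by (induct A rule: infinite_finite_induct) (auto simp: gf_elems_add, auto simp: gf_elems_def)

lemma finite_card_gf_elems:
  assumes "p \<noteq> 0"
  shows "finite (gf_elems p) \<and> card (gf_elems p) \<le> 2 ^ degree p"
proof -
  let ?lists = "{xs :: bit list. set xs \<subseteq> UNIV \<and> length xs = degree p}"
  have sub: "gf_elems p \<subseteq> Poly ` ?lists"
  proof
    fix x assume "x \<in> gf_elems p"
    then have len: "length (coeffs x) \<le> degree p"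
      using assms by (cases "x = 0") (auto simp: mem_gf_elems_iff length_coeffs_degree)
    have "x = Poly (coeffs x @ replicate (degree p - length (coeffs x)) 0)"
      by (simp add: Poly_append_replicate_zero)
    then show "x \<in> Poly ` ?lists"
      using len by (intro image_eqI[where x = "coeffs x @ replicate (degree p - length (coeffs x)) 0"]) auto
  qed
  have fin: "finite ?lists"
    by (rule finite_lists_length_eq) (simp add: bit_UNIV)
  have "card ?lists = 2 ^ degree p"
    by (subst card_lists_length_eq) (simp_all add: bit_UNIV numeral_2_eq_2)
  then show ?thesis
    using card_mono[OF finite_imageI[OF fin] sub] card_image_le[OF fin, of Poly]
      finite_subset[OF sub finite_imageI[OF fin]] by linarith
qed

definition gamma_pow :: "bit poly \<Rightarrow> nat \<Rightarrow> bit poly" where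
  "gamma_pow p i = [:0, 1:] ^ i mod p"

lemma gamma_pow_nonzero:
  assumes "primitive_poly m p" and "i \<le> 2 ^ m - 1"
  shows "gamma_pow p i \<noteq> 0"
proof
  let ?x = "[:0, 1 :: bit:]"
  assume "gamma_pow p i = 0"
  then have "(?x ^ i mod p * ?x ^ (2 ^ m - 1 - i)) mod p = 0"
    by (simp add: gamma_pow_def)
  moreover have "?x ^ i * ?x ^ (2 ^ m - 1 - i) = ?x ^ (2 ^ m - 1)"
    using assms(2) by (metis le_add_diff_inverse power_add)
  ultimately have "?x ^ (2 ^ m - 1) mod p = 0"
    by (metis mod_mult_left_eq)
  then show False
    using assms(1) by (simp add: primitive_poly_def)
qed

lemma inj_on_gamma_pow:
  assumes "primitive_poly m p"
  shows "inj_on (gamma_pow p) {1..<2 ^ m}"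
proof -
  let ?x = "[:0, 1 :: bit:]"
  have False if "1 \<le> i" "i < j" "j < 2 ^ m" "gamma_pow p i = gamma_pow p j" for i j
  proof -
    \<comment> \<open>multiplying by \<open>\<gamma>^(2^m - 1 - j)\<close> gives \<open>\<gamma>^e = 1\<close> for some \<open>1 \<le> e < 2^m - 1\<close>\<close>
    have "(?x ^ i * ?x ^ (2 ^ m - 1 - j)) mod p = (?x ^ j * ?x ^ (2 ^ m - 1 - j)) mod p"
      using that(4) unfolding gamma_pow_def by (metis mod_mult_cong mod_mod_trivial)
    moreover have "?x ^ j * ?x ^ (2 ^ m - 1 - j) = ?x ^ (2 ^ m - 1)"
      using that by (simp flip: power_add)
    ultimately have "?x ^ (i + (2 ^ m - 1 - j)) mod p = 1"
      using assms by (simp add: primitive_poly_def power_add)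
    moreover have "1 \<le> i + (2 ^ m - 1 - j)" "i + (2 ^ m - 1 - j) < 2 ^ m - 1"
      using that by auto
    ultimately show False
      using assms unfolding primitive_poly_def by blast
  qed
  then show ?thesis
    by (intro inj_onI) (metis atLeastLessThan_iff linorder_neqE_nat)
qed

lemma gamma_pow_image:
  assumes "primitive_poly m p"
  shows "gamma_pow p ` {1..<2 ^ m} = gf_elems p - {0}"
proof -
  have p: "p \<noteq> 0" "degree p = m"
    using assms by (auto simp: primitive_poly_def)
  have fin: "finite (gf_elems p - {0})"
    using finite_card_gf_elems[OF p(1)] by simp
  have sub: "gamma_pow p ` {1..<2 ^ m} \<subseteq> gf_elems p - {0}"
  proof
    fix y assume "y \<in> gamma_pow p ` {1..<2 ^ m}"
    then obtain i where "i < 2 ^ m" "y = gamma_pow p i" by auto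
    then show "y \<in> gf_elems p - {0}"
      using gamma_pow_nonzero[OF assms, of i] by (simp add: gamma_pow_def gf_elems_mod)
  qed
  have "card (gf_elems p - {0}) = card (gf_elems p) - 1"
    using finite_card_gf_elems[OF p(1)] by (simp add: card_Diff_singleton gf_elems_def)
  then have "card (gf_elems p - {0}) \<le> 2 ^ m - 1"
    using finite_card_gf_elems[OF p(1)] p(2) by (simp add: diff_le_mono)
  moreover have "card (gamma_pow p ` {1..<2 ^ m}) = 2 ^ m - 1"
    using card_image[OF inj_on_gamma_pow[OF assms]] by simp
  moreover have "card (gamma_pow p ` {1..<2 ^ m}) \<le> card (gf_elems p - {0})"
    using fin sub by (rule card_mono)
  ultimately show ?thesis
    using fin sub by (intro card_subset_eq) linarith+
qed

definition eps_decode :: "bit poly \<Rightarrow> nat \<Rightarrow> bit poly" where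
  "eps_decode p s = (if s = 0 then 0 else gamma_pow p s)"

lemma eps_decode_in_gf_elems: "eps_decode p s \<in> gf_elems p"
  by (simp add: eps_decode_def gamma_pow_def gf_elems_def)

lemma eps_idx_nonzero_witness:
  assumes "primitive_poly m p" and "x \<in> gf_elems p" and "x \<noteq> 0"
  obtains i where "1 \<le> i" "i < 2 ^ m" "eps_idx p x = i" "gamma_pow p i = x"
proof -
  have "x \<in> gamma_pow p ` {1..<2 ^ m}"
    using assms gamma_pow_image[OF assms(1)] by simp
  then obtain i where i: "1 \<le> i" "i < 2 ^ m" "gamma_pow p i = x"
    by auto
  have e: "eps_idx p x = (LEAST i. 1 \<le> i \<and> gamma_pow p i = x)"
    using assms(3) by (simp add: eps_idx_def gamma_pow_def)
  have "1 \<le> eps_idx p x \<and> gamma_pow p (eps_idx p x) = x"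
    unfolding e by (rule LeastI[of _ i]) (use i in auto)
  moreover have "eps_idx p x \<le> i"
    unfolding e by (rule Least_le) (use i in auto)
  ultimately show ?thesis
    using i that by auto
qed

lemma eps_idx_less:
  assumes "primitive_poly m p" and "x \<in> gf_elems p"
  shows "eps_idx p x < 2 ^ m"
proof (cases "x = 0")
  case False
  show ?thesis
    by (rule eps_idx_nonzero_witness[OF assms False]) simp
qed (simp add: eps_idx_def)

lemma eps_decode_eps_idx:
  assumes "primitive_poly m p" and "x \<in> gf_elems p"
  shows "eps_decode p (eps_idx p x) = x"
proof (cases "x = 0")
  case False
  show ?thesis
    by (rule eps_idx_nonzero_witness[OF assms False]) (simp add: eps_decode_def)
qed (simp add: eps_idx_def eps_decode_def)

text \<open>The slot \<open>s \<in> {1..<2^m}\<close> with \<open>\<gamma>^s = x^i\<close>: for \<open>i = 0\<close> it is \<open>2^m - 1\<close>, as \<open>\<gamma>^(2^m - 1) = 1\<close>.\<close>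

definition log_monom :: "nat \<Rightarrow> nat \<Rightarrow> nat" where
  "log_monom m i = (if i = 0 then 2 ^ m - 1 else i)"

lemma log_monom_bounds:
  assumes "1 \<le> m" and "i < m"
  shows "1 \<le> log_monom m i" and "log_monom m i < 2 ^ m"
  using assms less_exp[of m] by (auto simp: log_monom_def; linarith)+

lemma inj_on_log_monom: "inj_on (log_monom m) {..<m}"
  using less_exp[of m] by (auto simp: inj_on_def log_monom_def; linarith)

lemma eps_decode_log_monom:
  assumes "primitive_poly m p" and "1 \<le> m" and "i < m"
  shows "eps_decode p (log_monom m i) = monom 1 i"
proof (cases "i = 0")
  case True
  then show ?thesis
    using assms log_monom_bounds[OF assms(2,3)]
    by (simp add: log_monom_def eps_decode_def gamma_pow_def primitive_poly_def monom_altdef)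
next
  case False
  have "degree ([:0, 1 :: bit:] ^ i) < degree p"
    using assms by (simp add: degree_linear_power primitive_poly_def)
  then show ?thesis
    using False by (simp add: log_monom_def eps_decode_def gamma_pow_def mod_poly_less monom_altdef)
qed

lemma coeff_sum_monom: "i < n \<Longrightarrow> coeff (\<Sum>i'<n. monom (c i') i') i = c i"
  by (simp add: coeff_sum coeff_monom)

lemma sum_apply: "sum f A x = (\<Sum>a\<in>A. f a x)"
  by (induct A rule: infinite_finite_induct) auto

interpretation fun_vs: vector_space "\<lambda>(c::'k::field) (f::'i \<Rightarrow> 'k) i. c * f i"
  by unfold_locales (auto simp: fun_eq_iff algebra_simps)

lemma in_span_unit_vectors:
  fixes z :: "'i \<Rightarrow> 'k::field"
  assumes "finite F" and "\<forall>n. n \<notin> F \<longrightarrow> z n = 0"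
  shows "z \<in> fun_vs.span ((\<lambda>n i. if i = n then 1 else 0) ` F)"
proof -
  have "z = (\<Sum>n\<in>F. (\<lambda>i. z n * (if i = n then 1 else 0)))"
  proof
    fix x
    have "(\<Sum>n\<in>F. (\<lambda>i. z n * (if i = n then 1 else 0))) x = (\<Sum>n\<in>F. if n = x then z n else 0)"
      unfolding sum_apply by (intro sum.cong) auto
    then show "z x = (\<Sum>n\<in>F. (\<lambda>i. z n * (if i = n then 1 else 0))) x"
      using assms by (simp add: sum.delta')
  qed
  also have "\<dots> \<in> fun_vs.span ((\<lambda>n i. if i = n then 1 else 0) ` F)"
    by (intro fun_vs.span_sum fun_vs.span_scale fun_vs.span_base) auto
  finally show ?thesis .
qed

lemma card_le_card_support:
  fixes B :: "('i \<Rightarrow> 'k::field) set"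
  assumes "fun_vs.independent B" and "finite F" and "\<forall>y\<in>B. \<forall>n. n \<notin> F \<longrightarrow> y n = 0"
  shows "card B \<le> card F"
proof -
  have "B \<subseteq> fun_vs.span ((\<lambda>n i. if i = n then 1 else 0) ` F)"
  proof
    fix y assume "y \<in> B"
    then show "y \<in> fun_vs.span ((\<lambda>n i. if i = n then 1 else 0) ` F)"
      using assms(2,3) by (intro in_span_unit_vectors) auto
  qed
  then have "card B \<le> card ((\<lambda>n i. if i = n then 1 else 0 :: 'k) ` F)"
    by (rule conjunct2[OF fun_vs.independent_span_bound[OF finite_imageI[OF assms(2)] assms(1)]])
  also have "\<dots> \<le> card F"
    using assms(2) by (rule card_image_le)
  finally show ?thesis .
qed

lemma fun_vs_dim_le_card_of_determining:
  fixes K S :: "('i \<Rightarrow> 'k::field) set"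
  assumes "fun_vs.subspace K" and "S \<subseteq> K" and "finite F"
    and determined: "\<And>y. y \<in> K \<Longrightarrow> \<forall>n\<in>F. y n = 0 \<Longrightarrow> y = 0"
  shows "fun_vs.dim S \<le> card F"
proof -
  define restrict where "restrict = (\<lambda>y n. if n \<in> F then y n else (0::'k))"
  interpret restrict: Vector_Spaces.linear "\<lambda>(c::'k) (f::'i \<Rightarrow> 'k) i. c * f i"
      "\<lambda>(c::'k) (f::'i \<Rightarrow> 'k) i. c * f i" restrict
  proof -
    have "restrict (y + z) = restrict y + restrict z" "restrict (\<lambda>i. c * y i) = (\<lambda>i. c * restrict y i)"
      for y z :: "'i \<Rightarrow> 'k" and c :: 'k
      by (simp_all add: restrict_def fun_eq_iff)
    then show "Vector_Spaces.linear (\<lambda>(c::'k) (f::'i \<Rightarrow> 'k) i. c * f i)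
      (\<lambda>(c::'k) (f::'i \<Rightarrow> 'k) i. c * f i) restrict"
      unfolding Vector_Spaces.linear_iff using fun_vs.vector_space_axioms by blast
  qed
  obtain B where B: "B \<subseteq> S" "fun_vs.independent B" "S \<subseteq> fun_vs.span B" "card B = fun_vs.dim S"
    by (rule fun_vs.basis_exists)
  have "inj_on restrict K"
  proof (rule inj_onI)
    fix y z assume y: "y \<in> K" and z: "z \<in> K" and eq: "restrict y = restrict z"
    have "(y - z) n = 0" if "n \<in> F" for n
      using fun_cong[OF eq, of n] that by (simp add: restrict_def)
    then have "y - z = 0"
      using determined fun_vs.subspace_diff[OF assms(1) y z] by blast
    then show "y = z" by simp
  qed
  moreover have "fun_vs.span B \<subseteq> K"
    using B(1) assms(1,2) by (intro fun_vs.span_minimal) auto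
  ultimately have inj: "inj_on restrict (fun_vs.span B)"
    by (rule inj_on_subset)
  have "card B = card (restrict ` B)"
    using card_image[OF inj_on_subset[OF inj fun_vs.span_superset]] by (rule sym)
  also have "\<dots> \<le> card F"
    using restrict.independent_injective_image[OF B(2) inj] assms(3)
    by (rule card_le_card_support) (simp add: restrict_def)
  finally show ?thesis using B(4) by simp
qed

lemma mixed_radix_digit_less:
  fixes Q b j s :: nat
  assumes "j < b" and "s < Q"
  shows "j * Q + s < Q * b"
proof -
  have "j * Q + s < (j + 1) * Q" using assms by simp
  also have "\<dots> \<le> b * Q" using assms by (intro mult_right_mono) auto
  finally show ?thesis by (simp add: mult.commute)
qed

lemma mixed_radix_div_mod:
  fixes Q b k j s :: nat
  assumes "j < b" and "s < Q"
  shows "(k * (Q * b) + j * Q + s) div (Q * b) = k"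
    and "(k * (Q * b) + j * Q + s) mod (Q * b) = j * Q + s"
    and "(k * (Q * b) + j * Q + s) mod Q = s"
proof -
  have lt: "j * Q + s < Q * b" using assms by (rule mixed_radix_digit_less)
  have e: "k * (Q * b) + j * Q + s = (j * Q + s) + k * (Q * b)" by simp
  have qb: "Q * b > 0" using lt by linarith
  show "(k * (Q * b) + j * Q + s) div (Q * b) = k"
    unfolding e using lt qb by simp
  show "(k * (Q * b) + j * Q + s) mod (Q * b) = j * Q + s"
    unfolding e using lt qb by simp
  have "k * (Q * b) + j * Q + s = s + (k * b + j) * Q" by (simp add: algebra_simps)
  then show "(k * (Q * b) + j * Q + s) mod Q = s"
    using assms by simp
qed

lemma mixed_radix_less:
  fixes Q b k j s t :: nat
  assumes "k < t" and "j < b" and "s < Q"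
  shows "k * (Q * b) + j * Q + s < Q * b * t"
proof -
  have "k * (Q * b) + j * Q + s < (k + 1) * (Q * b)"
    using mixed_radix_digit_less[OF assms(2,3)] by simp
  also have "\<dots> \<le> t * (Q * b)" using assms(1) by (intro mult_right_mono) auto
  finally show ?thesis by (simp add: mult.commute)
qed

lemma mixed_radix_decomp:
  fixes Q b n t :: nat
  assumes "n < Q * b * t"
  shows "n = (n div (Q * b)) * (Q * b) + ((n mod (Q * b)) div Q) * Q + n mod Q"
    and "n div (Q * b) < t" and "(n mod (Q * b)) div Q < b" and "n mod Q < Q"
proof -
  have "n mod (Q * b) = (n mod (Q * b)) div Q * Q + n mod Q"
    by (metis div_mult_mod_eq mod_mod_cancel dvd_triv_left)
  then show "n = (n div (Q * b)) * (Q * b) + ((n mod (Q * b)) div Q) * Q + n mod Q"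
    by (metis div_mult_mod_eq add.assoc)
  show "n div (Q * b) < t"
    using assms by (simp add: less_mult_imp_div_less mult.commute)
  have "Q * b > 0" using assms by (cases "Q * b") auto
  then show "(n mod (Q * b)) div Q < b"
    by (simp add: less_mult_imp_div_less mult.commute)
  show "n mod Q < Q"
    using \<open>Q * b > 0\<close> by simp
qed

locale alpha_code =
  fixes m b t :: nat and p :: "bit poly" and M :: "(nat \<Rightarrow> bit poly) \<Rightarrow> (nat \<Rightarrow> bit poly)"
  assumes m_pos: "1 \<le> m" and b_pos: "1 \<le> b" and t_pos: "0 < t"
    and primitive: "primitive_poly m p"
    and M_maps: "\<forall>v\<in>gf_vecs p b. M v \<in> gf_vecs p b"
    and M_add: "\<forall>u\<in>gf_vecs p b. \<forall>v\<in>gf_vecs p b. M (u + v) = M u + M v"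
begin

abbreviation "Q \<equiv> (2::nat) ^ m"
abbreviation "N \<equiv> Q * b * t"
abbreviation "V \<equiv> gf_vecs p b"
abbreviation "pos k j s \<equiv> k * (Q * b) + j * Q + s"
abbreviation "monom_slots \<equiv> log_monom m ` {..<m}"

lemma Mpow_maps: "v \<in> V \<Longrightarrow> (M ^^ k) v \<in> V"
  by (induct k) (auto simp: M_maps)

lemma Mpow_add: "u \<in> V \<Longrightarrow> v \<in> V \<Longrightarrow> (M ^^ k) (u + v) = (M ^^ k) u + (M ^^ k) v"
  by (induct k) (auto simp: M_add Mpow_maps)

lemma Mpow_zero: "(M ^^ k) 0 = 0"
proof -
  have zero: "0 \<in> V" by (simp add: gf_vecs_def gf_elems_def)
  have "(M ^^ k) 0 = (M ^^ k) 0 + (M ^^ k) 0"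
    using Mpow_add[OF zero zero] by simp
  then show ?thesis by simp
qed

definition decode :: "(nat \<Rightarrow> bit) \<Rightarrow> nat \<Rightarrow> nat \<Rightarrow> bit poly" where
  "decode y k = (\<lambda>j. if j < b then \<Sum>s<Q. smult (y (pos k j s)) (eps_decode p s) else 0)"

definition block_weight :: "(nat \<Rightarrow> bit) \<Rightarrow> nat \<Rightarrow> nat \<Rightarrow> bit" where
  "block_weight y k j = (\<Sum>s<Q. y (pos k j s))"

definition constraint_space :: "(nat \<Rightarrow> bit) set" where
  "constraint_space = {y. (\<forall>n\<ge>N. y n = 0) \<and> (\<forall>k<t. \<forall>j<b. block_weight y k j = block_weight y 0 0)
     \<and> (\<forall>k<t. decode y k = (M ^^ k) (decode y 0))}"

lemma decode_in_V: "decode y k \<in> V"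
  by (auto simp: decode_def gf_vecs_def intro!: gf_elems_sum gf_elems_smult eps_decode_in_gf_elems)

lemma decode_add: "decode (y + z) k = decode y k + decode z k"
  unfolding decode_def fun_eq_iff plus_fun_apply smult_add_left sum.distrib by simp

lemma block_weight_add: "block_weight (y + z) k j = block_weight y k j + block_weight z k j"
  unfolding block_weight_def plus_fun_apply sum.distrib ..

lemma decode_zero: "decode 0 k = 0"
  by (simp add: decode_def fun_eq_iff)

lemma zero_in_constraint_space: "0 \<in> constraint_space"
  by (simp add: constraint_space_def block_weight_def decode_zero Mpow_zero)

lemma add_in_constraint_space:
  assumes y: "y \<in> constraint_space" and z: "z \<in> constraint_space"
  shows "y + z \<in> constraint_space"
  unfolding constraint_space_def
proof (intro CollectI conjI allI impI)
  fix k assume k: "k < t"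
  have "decode y k = (M ^^ k) (decode y 0)" "decode z k = (M ^^ k) (decode z 0)"
    using y z k unfolding constraint_space_def by blast+
  then have "decode (y + z) k = (M ^^ k) (decode y 0) + (M ^^ k) (decode z 0)"
    by (simp add: decode_add)
  also have "\<dots> = (M ^^ k) (decode (y + z) 0)"
    by (simp add: decode_add Mpow_add decode_in_V)
  finally show "decode (y + z) k = (M ^^ k) (decode (y + z) 0)" .
next
  fix k j assume "k < t" "j < b"
  then have "block_weight y k j = block_weight y 0 0" "block_weight z k j = block_weight z 0 0"
    using y z unfolding constraint_space_def by blast+
  then show "block_weight (y + z) k j = block_weight (y + z) 0 0"
    by (simp add: block_weight_add)
next
  fix n assume "N \<le> n"
  then have "y n = 0" "z n = 0"
    using y z unfolding constraint_space_def by blast+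
  then show "(y + z) n = 0" by simp
qed

lemma subspace_constraint_space: "fun_vs.subspace constraint_space"
proof -
  have "(\<lambda>i. c * y i) \<in> constraint_space" if "y \<in> constraint_space" for c :: bit and y
  proof (cases c)
    case zero
    then show ?thesis using zero_in_constraint_space by (simp add: zero_fun_def)
  next
    case one
    then have "(\<lambda>i. c * y i) = y" by (simp only: mult_1_left)
    then show ?thesis using that by (simp only:)
  qed
  then show ?thesis
    unfolding fun_vs.subspace_def
    using zero_in_constraint_space add_in_constraint_space by (intro conjI ballI allI) simp_all
qed

lemma alpha_map_pos:
  assumes v: "v \<in> V" and k: "k < t" and j: "j < b" and s: "s < Q"
  shows "alpha_map p m b t M v (pos k j s) = (if s = eps_idx p ((M ^^ k) v j) then 1 else 0)"
proof -
  define w where "w = (M ^^ k) v"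
  have idx_less: "eps_idx p (w i) < Q" if "i < b" for i
    using Mpow_maps[OF v] that by (intro eps_idx_less[OF primitive]) (auto simp: w_def gf_vecs_def)
  have "(\<exists>j'<b. j * Q + s = j' * Q + eps_idx p (w j')) \<longleftrightarrow> s = eps_idx p (w j)"
  proof
    assume "\<exists>j'<b. j * Q + s = j' * Q + eps_idx p (w j')"
    then obtain j' where j': "j' < b" "j * Q + s = j' * Q + eps_idx p (w j')" by auto
    then have "s = eps_idx p (w j')"
      using idx_less[OF j'(1)] s by (metis mod_mult_self3 mod_less)
    moreover from this j'(2) have "j = j'" by simp
    ultimately show "s = eps_idx p (w j)" by simp
  qed (use j in auto)
  then show ?thesis
    unfolding alpha_map_def eps_vec_def
    using mixed_radix_less[OF k j s] mixed_radix_div_mod[OF j s, of k] by (simp add: w_def)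
qed

lemma decode_alpha_map:
  assumes v: "v \<in> V" and k: "k < t"
  shows "decode (alpha_map p m b t M v) k = (M ^^ k) v"
proof
  fix j
  have w: "(M ^^ k) v \<in> V" using v by (rule Mpow_maps)
  show "decode (alpha_map p m b t M v) k j = (M ^^ k) v j"
  proof (cases "j < b")
    case True
    then have w_j: "(M ^^ k) v j \<in> gf_elems p" using w by (simp add: gf_vecs_def)
    have "decode (alpha_map p m b t M v) k j
        = (\<Sum>s<Q. smult (alpha_map p m b t M v (pos k j s)) (eps_decode p s))"
      using True by (simp add: decode_def)
    also have "\<dots> = (\<Sum>s<Q. if s = eps_idx p ((M ^^ k) v j) then eps_decode p s else 0)"
      by (rule sum.cong) (simp_all add: alpha_map_pos[OF v k True])
    also have "\<dots> = (M ^^ k) v j"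
      using eps_idx_less[OF primitive w_j] eps_decode_eps_idx[OF primitive w_j] by simp
    finally show ?thesis .
  qed (use w in \<open>simp add: decode_def gf_vecs_def\<close>)
qed

lemma block_weight_alpha_map:
  assumes v: "v \<in> V" and k: "k < t" and j: "j < b"
  shows "block_weight (alpha_map p m b t M v) k j = 1"
proof -
  have w_j: "(M ^^ k) v j \<in> gf_elems p"
    using Mpow_maps[OF v] j by (simp add: gf_vecs_def)
  have "block_weight (alpha_map p m b t M v) k j
        = (\<Sum>s<Q. if s = eps_idx p ((M ^^ k) v j) then 1 else 0)"
    unfolding block_weight_def using alpha_map_pos[OF v k j] by (auto intro!: sum.cong)
  then show ?thesis
    using eps_idx_less[OF primitive w_j] by simp
qed

lemma alpha_map_in_constraint_space: "v \<in> V \<Longrightarrow> alpha_map p m b t M v \<in> constraint_space"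
  using decode_alpha_map[of v] block_weight_alpha_map[of v] t_pos b_pos
  by (simp add: constraint_space_def alpha_map_def)

lemma decode_sparse:
  assumes j: "j < b" and sparse: "\<And>s. s < Q \<Longrightarrow> s \<noteq> 0 \<Longrightarrow> s \<notin> monom_slots \<Longrightarrow> y (pos k j s) = 0"
  shows "decode y k j = (\<Sum>i<m. monom (y (pos k j (log_monom m i))) i)"
proof -
  have slots: "monom_slots \<subseteq> {..<Q}"
    using log_monom_bounds[OF m_pos] by auto
  have "decode y k j = (\<Sum>s<Q. smult (y (pos k j s)) (eps_decode p s))"
    using j by (simp add: decode_def)
  also have "\<dots> = (\<Sum>s\<in>monom_slots. smult (y (pos k j s)) (eps_decode p s))"
    using slots sparse by (intro sum.mono_neutral_right) (auto simp: eps_decode_def)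
  also have "\<dots> = (\<Sum>i<m. smult (y (pos k j (log_monom m i))) (eps_decode p (log_monom m i)))"
    by (simp add: sum.reindex[OF inj_on_log_monom])
  also have "\<dots> = (\<Sum>i<m. monom (y (pos k j (log_monom m i))) i)"
    by (intro sum.cong) (simp_all add: eps_decode_log_monom[OF primitive m_pos] smult_monom)
  finally show ?thesis .
qed

definition free_positions :: "nat set" where
  "free_positions = (\<lambda>(k, j, s). pos k j s) ` ({..<t} \<times> {..<b} \<times> ({1..<Q} - monom_slots))
     \<union> (\<lambda>(j, s). pos 0 j s) ` ({..<b} \<times> monom_slots) \<union> {0}"

lemma card_free_positions:
  "finite free_positions \<and> card free_positions \<le> t * (b * (Q - 1 - m)) + b * m + 1"
proof -
  have card_slots: "card monom_slots = m"
    using card_image[OF inj_on_log_monom[of m]] by simp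
  have "monom_slots \<subseteq> {1..<Q}"
    using log_monom_bounds[OF m_pos] by auto
  then have "card ({1..<Q} - monom_slots) = Q - 1 - m"
    using card_slots by (simp add: card_Diff_subset)
  then have "card ((\<lambda>(k, j, s). pos k j s) ` ({..<t} \<times> {..<b} \<times> ({1..<Q} - monom_slots)))
      \<le> t * (b * (Q - 1 - m))"
    using card_image_le[of "{..<t} \<times> {..<b} \<times> ({1..<Q} - monom_slots)"]
    by (simp add: card_cartesian_product)
  moreover have "card ((\<lambda>(j, s). pos 0 j s) ` ({..<b} \<times> monom_slots)) \<le> b * m"
    using card_image_le[of "{..<b} \<times> monom_slots"] card_slots by (simp add: card_cartesian_product)
  moreover have "card (A \<union> B \<union> {0 :: nat}) \<le> card A + card B + 1" for A B
    using card_Un_le[of "A \<union> B" "{0}"] card_Un_le[of A B] by simp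
  ultimately have "card free_positions \<le> t * (b * (Q - 1 - m)) + b * m + 1"
    unfolding free_positions_def by (meson add_mono order.trans le_refl)
  moreover have "finite free_positions"
    by (simp add: free_positions_def)
  ultimately show ?thesis by blast
qed

lemma non_monom_slot_zero:
  assumes free: "\<forall>n\<in>free_positions. y n = 0"
    and "k < t" "j < b" "s < Q" "s \<noteq> 0" "s \<notin> monom_slots"
  shows "y (pos k j s) = 0"
proof -
  have "pos k j s \<in> free_positions"
    unfolding free_positions_def using assms by (intro UnI1 image_eqI[where x = "(k, j, s)"]) auto
  then show ?thesis using free by blast
qed

lemma decode_zero_if_free_zero:
  assumes y: "y \<in> constraint_space" and free: "\<forall>n\<in>free_positions. y n = 0" and k: "k < t"
  shows "decode y k = 0"
proof -
  have "decode y 0 j = 0" for j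
  proof (cases "j < b")
    case True
    have "y (pos 0 j s) = 0" if "s \<in> monom_slots" for s
    proof -
      have "pos 0 j s \<in> free_positions"
        unfolding free_positions_def using True that by (intro UnI1 UnI2 image_eqI[where x = "(j, s)"]) auto
      then show ?thesis using free by blast
    qed
    moreover have "decode y 0 j = (\<Sum>i<m. monom (y (pos 0 j (log_monom m i))) i)"
      by (rule decode_sparse[OF True]) (rule non_monom_slot_zero[OF free t_pos True])
    ultimately show ?thesis by simp
  qed (simp add: decode_def)
  then have "decode y 0 = 0" by auto
  then show ?thesis
    using y k by (simp add: constraint_space_def Mpow_zero)
qed

lemma eq_zero_if_free_zero:
  assumes y: "y \<in> constraint_space" and free: "\<forall>n\<in>free_positions. y n = 0"
  shows "y = 0"
proof -
  have nonzero_slot: "y (pos k j s) = 0" if "k < t" "j < b" "s < Q" "s \<noteq> 0" for k j s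
  proof (cases "s \<in> monom_slots")
    case True
    then obtain i where i: "i < m" "s = log_monom m i" by auto
    have "decode y k j = (\<Sum>i<m. monom (y (pos k j (log_monom m i))) i)"
      by (rule decode_sparse[OF that(2)]) (rule non_monom_slot_zero[OF free that(1,2)])
    then have "coeff (decode y k j) i = y (pos k j s)"
      using i by (simp add: coeff_sum_monom)
    then show ?thesis
      using decode_zero_if_free_zero[OF y free that(1)] by simp
  qed (use non_monom_slot_zero[OF free that] in blast)
  have weight: "block_weight y k j = y (pos k j 0)" if "k < t" "j < b" for k j
  proof -
    have "block_weight y k j = (\<Sum>s<Q. if s = 0 then y (pos k j 0) else 0)"
      unfolding block_weight_def using nonzero_slot[OF that] by (intro sum.cong) auto
    then show ?thesis by simp
  qed
  have slot_zero: "y (pos k j 0) = 0" if "k < t" "j < b" for k j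
  proof -
    have "block_weight y k j = block_weight y 0 0"
      using y that unfolding constraint_space_def by blast
    moreover have "y 0 = 0"
      using free by (simp add: free_positions_def)
    ultimately show ?thesis
      using weight[OF that] weight[OF t_pos] b_pos by simp
  qed
  show "y = 0"
  proof
    fix n
    show "y n = 0 n"
    proof (cases "n < N")
      case True
      note n = mixed_radix_decomp[OF True]
      show ?thesis
        using nonzero_slot[OF n(2-4)] slot_zero[OF n(2,3)] n(1) by (cases "n mod Q = 0") auto
    next
      case False
      then show ?thesis using y by (simp add: constraint_space_def)
    qed
  qed
qed

lemma dim_alpha_map_le:
  "fun_vs.dim (alpha_map p m b t M ` V) \<le> t * (b * (Q - 1 - m)) + b * m + 1"
proof -
  have "alpha_map p m b t M ` V \<subseteq> constraint_space"
    using alpha_map_in_constraint_space by blast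
  then have "fun_vs.dim (alpha_map p m b t M ` V) \<le> card free_positions"
    using subspace_constraint_space card_free_positions eq_zero_if_free_zero
    by (intro fun_vs_dim_le_card_of_determining) simp_all
  then show ?thesis
    using card_free_positions by linarith
qed

end

lemma bscale_eq: "bscale = (\<lambda>c f i. c * f i)"
  by (intro ext) (simp add: bscale_def)

theorem mainTheorem9:
  fixes m b t :: nat and p :: "bit poly"
    and M :: "(nat \<Rightarrow> bit poly) \<Rightarrow> (nat \<Rightarrow> bit poly)"
  assumes "m \<ge> 1" and "b \<ge> 1"
    and "primitive_poly m p"
    and M_maps: "\<forall>v\<in>gf_vecs p b. M v \<in> gf_vecs p b"
    and M_add: "\<forall>u\<in>gf_vecs p b. \<forall>v\<in>gf_vecs p b. M (u + v) = M u + M v"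
    and M_smult: "\<forall>c\<in>gf_elems p. \<forall>v\<in>gf_vecs p b. M (gf_smult p c v) = gf_smult p c (M v)"
    and M_bij: "bij_betw M (gf_vecs p b) (gf_vecs p b)"
    and ord_t: "t \<ge> 1" "\<forall>v\<in>gf_vecs p b. (M ^^ t) v = v"
      "\<forall>s. 1 \<le> s \<and> s < t \<longrightarrow> (\<exists>v\<in>gf_vecs p b. (M ^^ s) v \<noteq> v)"
  shows "int (vector_space.dim bscale (alpha_map p m b t M ` gf_vecs p b))
           \<le> int (2 ^ m * b * t) - (int (b * t) - 1) - int (m * b * (t - 1))"
proof -
  \<comment> \<open>only additivity of \<open>M\<close> and \<open>t \<ge> 1\<close> are used: the bound does not need
    \<open>\<bbbF>\<^sub>2\<^sub>^\<^sub>m\<close>-linearity, invertibility or the exact order of \<open>M\<close>\<close>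
  interpret alpha_code m b t p M
    using \<open>m \<ge> 1\<close> \<open>b \<ge> 1\<close> ord_t(1) \<open>primitive_poly m p\<close> M_maps M_add by unfold_locales auto
  have dim: "vector_space.dim bscale (alpha_map p m b t M ` V) \<le> t * (b * (2 ^ m - 1 - m)) + b * m + 1"
    unfolding bscale_eq by (rule dim_alpha_map_le)
  obtain q where q: "2 ^ m = q + m + 1"
    using less_exp[of m] by (metis add.commute add_Suc_right less_imp_Suc_add add_Suc_shift plus_1_eq_Suc)
  obtain t' where t': "t = t' + 1"
    using ord_t(1) by (metis le_add_diff_inverse2)
  have "int (t * (b * (2 ^ m - 1 - m)) + b * m + 1)
        = int (2 ^ m * b * t) - (int (b * t) - 1) - int (m * b * (t - 1))"
    unfolding q t' by (simp add: algebra_simps)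
  then show ?thesis
    using dim by linarith
qed

end
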